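(* Let $a,b,c$ be positive numbers with $a<b<c$, $\lfloor c/b\rfloor\ge2$, $b-a<c_0<a$ and $0\le c_1\le2a-b$, where $c_0=c-\lfloor c/b\rfloor b$ and $c_1=c-c_0-\lfloor(c-c_0)/a\rfloor a$. Suppose $\mathcal S_{a,b,c}\ne\emptyset$ and either $a/b\notin\mathbb Q$, or $a/b=p/q$ and $c\in(b/q)\mathbb Z$ for some coprime positive integers $p,q$. Then $$\Big(\big(\mathcal S_{a,b,c}\cap([0,c_0+a-b)+a\mathbb Z)\big)+\lfloor c/b\rfloor b\Big)\cup\bigcup_{k=0}^{\lfloor c/b\rfloor-1}(\mathcal S_{a,b,c}+kb)=\mathbb R.$$
   Context: For $a,b,c>0$ and $t\in\mathbb R$, $\mathbf M_{a,b,c}(t)=(\chi_{[0,c)}(t-\mu+\lambda))_{\mu\in a\mathbb Z,\lambda\in b\mathbb Z}$ is the infinite matrix with rows indexed by $a\mathbb Z$ and columns by $b\mathbb Z$, acting by $(\mathbf M_{a,b,c}(t)\mathbf x)(\mu)=\sum_{\lambda\in b\mathbb Z}\chi_{[0,c)}(t-\mu+\lambda)\mathbf x(\lambda)$. $\mathcal B_b^0$ is the set of vectors $(\mathbf x(\lambda))_{\lambda\in b\mathbb Z}$ with entries in $\{0,1\}$ and $\mathbf x(0)=1$. $\mathbf 1$ denotes the vector indexed by $a\mathbb Z$ with all entries $1$. $\mathcal S_{a,b,c}=\{t:\mathbf M_{a,b,c}(t)\mathbf x=\mathbf 1\text{ for some }\mathbf x\in\mathcal B_b^0\}$. For $A\subset\mathbb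 R$, $A+r=\{x+r:x\in A\}$ and $A+a\mathbb Z=\{x+ak:x\in A,k\in\mathbb Z\}$. *)

theory Defs
  imports "HOL-Analysis.Analysis"
begin

text \<open>Entry of M_{a,b,c}(t) at row mu = a*m (m :: int) and column lambda = b*n (n :: int).\<close>
definition Mentry :: "real \<Rightarrow> real \<Rightarrow> real \<Rightarrow> real \<Rightarrow> int \<Rightarrow> int \<Rightarrow> real" where
  "Mentry a b c t m n = indicator {0..<c} (t - a * of_int m + b * of_int n)"

text \<open>Only finitely many entries of a row are nonzero (c is finite, b > 0), so
  the sum is the finite sum over the support of the row.\<close>
definition Mmult :: "real \<Rightarrow> real \<Rightarrow> real \<Rightarrow> real \<Rightarrow> (int \<Rightarrow> real) \<Rightarrow> int \<Rightarrow> real" where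
  "Mmult a b c t x m = (\<Sum>n\<in>{n. Mentry a b c t m n \<noteq> 0}. Mentry a b c t m n * x n)"

text \<open>B_b^0: 0/1 vectors indexed by b*Z (index n stands for lambda = b n) with x(0) = 1.\<close>
definition B0 :: "(int \<Rightarrow> real) set" where
  "B0 = {x. (\<forall>n. x n \<in> {0, 1}) \<and> x 0 = 1}"

definition Sabc :: "real \<Rightarrow> real \<Rightarrow> real \<Rightarrow> real set" where
  "Sabc a b c = {t. \<exists>x\<in>B0. \<forall>m. Mmult a b c t x m = 1}"

end

theory Submission
  imports Defs
begin

text \<open>Let \<open>K = \<lfloor>c/b\<rfloor>\<close>, so \<open>c = K b + c\<^sub>0\<close> with \<open>c\<^sub>0 < a < b\<close>, and let \<open>x\<close> solve
  \<open>M(t) x = 1\<close>. For any \<open>n\<close>, either \<open>x\<close> has a one among the \<open>K\<close> places \<open>n - K < n' \<le> n\<close>,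
  and re-centring \<open>x\<close> there shows \<open>t + b n \<in> S + k b\<close> for some \<open>k < K\<close>; or it has none.
  In the latter case \<open>x (n - K) = 1\<close>, since every interval of length \<open>c + a\<close> contains a
  one of \<open>x\<close>, and the row whose window starts just above \<open>b (n - K)\<close> forces
  \<open>t + b (n - K) \<in> [0, c\<^sub>0 + a - b) + a\<int>\<close>. Since \<open>S\<close> is invariant under \<open>a\<int>\<close>, the
  covering set thus contains the orbit \<open>t\<^sub>0 + a\<int> + b\<int>\<close> of any \<open>t\<^sub>0 \<in> S\<close>.

  If \<open>a/b = p/q\<close> and \<open>c \<in> (b/q)\<int>\<close>, everything is a union of cells
  \<open>[kh, (k+1)h)\<close> with \<open>h = b/q\<close>, and by Bezout the orbit is \<open>t\<^sub>0 + h\<int>\<close>, which meets every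
  cell. If \<open>a/b\<close> is irrational, the orbit is dense, and the covering set is closed in the
  lower-limit topology (a limit from the right of solutions is a solution, by compactness
  of \<open>{0,1}\<^sup>\<int>\<close>), so it is everything.\<close>

section \<open>Solutions and the covering set\<close>

text \<open>Unlike \<open>B0\<close>, no entry is pinned to \<open>1\<close>, so a solution can be re-centred at any of
  its ones (\<open>Sabc_shift_support\<close>).\<close>

definition binary_solution :: "real \<Rightarrow> real \<Rightarrow> real \<Rightarrow> real \<Rightarrow> (int \<Rightarrow> real) \<Rightarrow> bool" where
  "binary_solution a b c t x \<longleftrightarrow> (\<forall>n. x n \<in> {0, 1}) \<and> (\<forall>m. Mmult a b c t x m = 1)"

lemma Sabc_iff: "t \<in> Sabc a b c \<longleftrightarrow> (\<exists>x. binary_solution a b c t x \<and> x 0 = 1)"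
  by (auto simp: Sabc_def B0_def binary_solution_def)

lemma Mentry_ne_0_iff:
  "Mentry a b c t m n \<noteq> 0 \<longleftrightarrow>
     a * of_int m - t \<le> b * of_int n \<and> b * of_int n < a * of_int m - t + c"
  by (auto simp: Mentry_def indicator_def)

lemma binary_solution_row_hit:
  assumes "binary_solution a b c t x"
  shows "\<exists>n. a * of_int m - t \<le> b * of_int n \<and> b * of_int n < a * of_int m - t + c \<and> x n = 1"
proof (rule ccontr)
  assume none: "\<not> ?thesis"
  have "x n = 0" if "Mentry a b c t m n \<noteq> 0" for n
    using none that assms by (force simp: Mentry_ne_0_iff binary_solution_def)
  hence "Mmult a b c t x m = 0"
    unfolding Mmult_def by (intro sum.neutral) auto
  with assms show False by (simp add: binary_solution_def)
qed

lemma binary_solution_interval_hit: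
  assumes sol: "binary_solution a b c t x" and a: "0 < a" and long: "c + a \<le> \<beta> - \<alpha>"
  shows "\<exists>n. \<alpha> < b * of_int n \<and> b * of_int n < \<beta> \<and> x n = 1"
proof -
  define m where "m = \<lfloor>(\<beta> - c + t) / a\<rfloor>"
  have "of_int m \<le> (\<beta> - c + t) / a" "(\<beta> - c + t) / a < of_int m + 1"
    unfolding m_def by linarith+
  hence m: "a * of_int m \<le> \<beta> - c + t" "\<beta> - c + t < a * of_int m + a"
    using a by (simp_all add: field_simps)
  obtain n where "a * of_int m - t \<le> b * of_int n" "b * of_int n < a * of_int m - t + c" "x n = 1"
    using binary_solution_row_hit[OF sol] by blast
  with m long show ?thesis by (intro exI[of _ n]) auto
qed

lemma binary_solution_shift_a:
  assumes "binary_solution a b c t x"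
  shows "binary_solution a b c (t + a * of_int i) x"
proof -
  have "Mentry a b c (t + a * of_int i) m = Mentry a b c t (m - i)" for m
    by (auto simp: Mentry_def algebra_simps)
  hence "Mmult a b c (t + a * of_int i) x m = Mmult a b c t x (m - i)" for m
    by (simp add: Mmult_def)
  with assms show ?thesis by (simp add: binary_solution_def)
qed

lemma Sabc_shift_support:
  assumes sol: "binary_solution a b c t x" and "x k = 1"
  shows "t + b * of_int k \<in> Sabc a b c"
proof -
  have E: "Mentry a b c (t + b * of_int k) m n = Mentry a b c t m (n + k)" for m n
    by (simp add: Mentry_def algebra_simps)
  have "Mmult a b c (t + b * of_int k) (\<lambda>n. x (n + k)) m = Mmult a b c t x m" for m
    unfolding Mmult_def E
    by (rule sum.reindex_bij_witness[where i="\<lambda>n. n - k" and j="\<lambda>n. n + k"]) auto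
  with assms show ?thesis
    unfolding Sabc_iff binary_solution_def by (intro exI[of _ "\<lambda>n. x (n + k)"]) auto
qed

definition residue_window :: "real \<Rightarrow> real \<Rightarrow> real set" where
  "residue_window a d = {x + a * of_int k | x k. x \<in> {0..<d} \<and> k \<in> (UNIV :: int set)}"

lemma mem_residue_window:
  "y \<in> residue_window a d \<longleftrightarrow> (\<exists>j::int. 0 \<le> y - a * of_int j \<and> y - a * of_int j < d)"
proof
  assume "y \<in> residue_window a d"
  then obtain x k where "y = x + a * of_int k" "x \<in> {0..<d}"
    unfolding residue_window_def by blast
  thus "\<exists>j::int. 0 \<le> y - a * of_int j \<and> y - a * of_int j < d" by (intro exI[of _ k]) auto
next
  assume "\<exists>j::int. 0 \<le> y - a * of_int j \<and> y - a * of_int j < d"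
  then obtain j where "0 \<le> y - a * of_int j" "y - a * of_int j < d" by blast
  thus "y \<in> residue_window a d"
    unfolding residue_window_def by (intro CollectI exI[of _ "y - a * of_int j"] exI[of _ j]) auto
qed

definition Sabc_cover :: "real \<Rightarrow> real \<Rightarrow> real \<Rightarrow> int \<Rightarrow> real \<Rightarrow> real set" where
  "Sabc_cover a b c K d =
     (\<lambda>t. t + of_int K * b) ` (Sabc a b c \<inter> residue_window a d)
     \<union> (\<Union>k\<in>{0..<K}. (\<lambda>t. t + of_int k * b) ` Sabc a b c)"

lemma binary_solution_gap_left_end:
  assumes sol: "binary_solution a b c t x" and a: "0 < a" and b: "0 < b"
    and long: "c + a \<le> (of_int K + 2) * b"
    and gap: "\<And>n'. n - K < n' \<Longrightarrow> n' \<le> n \<Longrightarrow> x n' \<noteq> 1"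
  shows "x (n - K) = 1"
proof -
  have "c + a \<le> b * of_int (n + 1) - b * of_int (n - K - 1)"
    using long by (simp add: algebra_simps)
  then obtain n' where
    n': "b * of_int (n - K - 1) < b * of_int n'" "b * of_int n' < b * of_int (n + 1)" "x n' = 1"
    using binary_solution_interval_hit[OF sol a] by blast
  hence "n - K - 1 < n'" "n' < n + 1" using b by simp_all
  with gap n'(3) show ?thesis by (cases "n' = n - K") auto
qed

text \<open>The row whose window \<open>[a m - t, a m - t + c)\<close> starts just above \<open>b (n - K)\<close> must
  reach a one beyond the gap, i.e. at \<open>n + 1\<close> or later; this bounds the residue.\<close>

lemma binary_solution_gap_residue:
  assumes sol: "binary_solution a b c t x" and a: "0 < a" and b: "0 < b"
    and c0: "c0 = c - of_int K * b"
    and gap: "\<And>n'. n - K < n' \<Longrightarrow> n' \<le> n \<Longrightarrow> x n' \<noteq> 1"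
  shows "t + b * of_int (n - K) \<in> residue_window a (c0 + a - b)"
proof -
  define t' where "t' = t + b * of_int (n - K)"
  define i where "i = \<lfloor>t' / a\<rfloor>"
  define y where "y = t' - a * of_int i"
  have "of_int i \<le> t' / a" "t' / a < of_int i + 1" unfolding i_def by linarith+
  hence "a * of_int i \<le> t'" "t' < a * of_int i + a" using a by (simp_all add: field_simps)
  hence y: "0 \<le> y" "y < a" unfolding y_def by linarith+
  obtain n' where n': "a * of_int (i + 1) - t \<le> b * of_int n'"
    "b * of_int n' < a * of_int (i + 1) - t + c" "x n' = 1"
    using binary_solution_row_hit[OF sol] by blast
  have row: "a * of_int (i + 1) - t = b * of_int (n - K) + a - y"
    by (simp add: y_def t'_def algebra_simps)
  have "b * of_int (n - K) < b * of_int n'" using n'(1) row y by linarith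
  hence "n - K < n'" using b by simp
  hence "n + 1 \<le> n'" using gap n'(3) by force
  hence "b * of_int (n + 1) \<le> b * of_int n'" using b by simp
  hence "y < c0 + a - b" using n'(2) row c0 by (simp add: algebra_simps)
  with y show ?thesis
    unfolding mem_residue_window t'_def[symmetric] by (intro exI[of _ i]) (simp add: y_def)
qed

lemma binary_solution_shift_in_cover:
  assumes sol: "binary_solution a b c t x" and ab: "0 < a" "a < b"
    and c0: "c0 = c - of_int K * b" "c0 < a"
  shows "t + b * of_int n \<in> Sabc_cover a b c K (c0 + a - b)"
proof (cases "\<exists>k\<in>{0..<K}. x (n - k) = 1")
  case True
  then obtain k where k: "k \<in> {0..<K}" "x (n - k) = 1" by blast
  have "t + b * of_int (n - k) \<in> Sabc a b c" by (rule Sabc_shift_support[OF sol k(2)])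
  moreover have "t + b * of_int n = t + b * of_int (n - k) + of_int k * b"
    by (simp add: algebra_simps)
  ultimately show ?thesis using k(1) unfolding Sabc_cover_def by blast
next
  case False
  have gap: "x n' \<noteq> 1" if "n - K < n'" "n' \<le> n" for n'
  proof -
    have "n - n' \<in> {0..<K}" using that by auto
    with False have "x (n - (n - n')) \<noteq> 1" by blast
    thus ?thesis by simp
  qed
  have "x (n - K) = 1"
    by (rule binary_solution_gap_left_end[OF sol ab(1) _ _ gap])
      (use ab c0 in \<open>auto simp: algebra_simps\<close>)
  hence "t + b * of_int (n - K) \<in> Sabc a b c" by (rule Sabc_shift_support[OF sol])
  moreover have "t + b * of_int (n - K) \<in> residue_window a (c0 + a - b)"
    using ab by (intro binary_solution_gap_residue[OF sol ab(1) _ c0(1) gap]) auto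
  moreover have "t + b * of_int n = t + b * of_int (n - K) + of_int K * b"
    by (simp add: algebra_simps)
  ultimately show ?thesis unfolding Sabc_cover_def by blast
qed

lemma Sabc_coset_in_cover:
  assumes t: "t \<in> Sabc a b c" and ab: "0 < a" "a < b"
    and c0: "c0 = c - of_int K * b" "c0 < a"
  shows "t + a * of_int i + b * of_int n \<in> Sabc_cover a b c K (c0 + a - b)"
proof -
  obtain x where "binary_solution a b c t x" using t by (auto simp: Sabc_iff)
  hence "binary_solution a b c (t + a * of_int i) x" by (rule binary_solution_shift_a)
  from binary_solution_shift_in_cover[OF this ab c0] show ?thesis .
qed

section \<open>Sets closed from the right: the irrational case\<close>

text \<open>Closedness in the lower-limit (Sorgenfrey) topology.\<close>

definition right_closed :: "real set \<Rightarrow> bool" where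
  "right_closed A \<longleftrightarrow> (\<forall>t. (\<exists>\<^sub>F y in at_right t. y \<in> A) \<longrightarrow> t \<in> A)"

lemma right_closedI:
  assumes "\<And>t. t \<notin> A \<Longrightarrow> \<exists>\<beta>>t. \<forall>y. t < y \<longrightarrow> y < \<beta> \<longrightarrow> y \<notin> A"
  shows "right_closed A"
  unfolding right_closed_def frequently_def eventually_at_right_field using assms by blast

lemma right_closed_Un:
  assumes "right_closed A" "right_closed B"
  shows "right_closed (A \<union> B)"
  using assms unfolding right_closed_def Un_iff frequently_disj_iff by blast

lemma right_closed_Int:
  assumes "right_closed A" "right_closed B"
  shows "right_closed (A \<inter> B)"
  unfolding right_closed_def
proof (intro allI impI)
  fix t assume "\<exists>\<^sub>F y in at_right t. y \<in> A \<inter> B"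
  hence "\<exists>\<^sub>F y in at_right t. y \<in> A" "\<exists>\<^sub>F y in at_right t. y \<in> B"
    by (auto elim: frequently_elim1)
  with assms show "t \<in> A \<inter> B" by (simp add: right_closed_def)
qed

lemma right_closed_UN:
  "finite I \<Longrightarrow> (\<And>i. i \<in> I \<Longrightarrow> right_closed (A i)) \<Longrightarrow> right_closed (\<Union>i\<in>I. A i)"
proof (induction I rule: finite_induct)
  case empty
  show ?case by (simp add: right_closed_def)
next
  case (insert i I)
  thus ?case by (simp add: right_closed_Un)
qed

lemma right_closed_translation:
  assumes "right_closed A"
  shows "right_closed ((\<lambda>y. y + s) ` A)"
  unfolding right_closed_def
proof (intro allI impI)
  fix t assume "\<exists>\<^sub>F y in at_right t. y \<in> (\<lambda>y. y + s) ` A"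
  hence "\<exists>\<^sub>F y in at_right t. y - s \<in> A" by (rule frequently_elim1) force
  hence "\<exists>\<^sub>F y in at_right (t - s). y \<in> A"
    by (simp add: filtermap_at_right_shift[symmetric] frequently_filtermap)
  hence "t - s \<in> A" using assms by (simp add: right_closed_def)
  thus "t \<in> (\<lambda>y. y + s) ` A" by (rule rev_image_eqI) simp
qed

lemma right_closed_dense_eq_UNIV:
  assumes "right_closed A" and dense: "\<And>t e. 0 < e \<Longrightarrow> \<exists>y\<in>A. t < y \<and> y < t + e"
  shows "A = UNIV"
proof -
  have "\<exists>\<^sub>F y in at_right t. y \<in> A" for t
    unfolding frequently_def
  proof
    assume "\<forall>\<^sub>F y in at_right t. y \<notin> A"
    then obtain \<beta> where "\<beta> > t" "\<And>y. t < y \<Longrightarrow> y < \<beta> \<Longrightarrow> y \<notin> A"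
      by (auto simp: eventually_at_right_field)
    with dense[of "\<beta> - t" t] show False by auto
  qed
  with assms(1) show ?thesis by (auto simp: right_closed_def)
qed

lemma right_closed_residue_window:
  assumes a: "0 < a"
  shows "right_closed (residue_window a d)"
proof (rule right_closedI)
  fix t assume t: "t \<notin> residue_window a d"
  define i where "i = \<lfloor>t / a\<rfloor>"
  define z where "z = t - a * of_int i"
  have "of_int i \<le> t / a" "t / a < of_int i + 1" unfolding i_def by linarith+
  hence "a * of_int i \<le> t" "t < a * of_int i + a" using a by (simp_all add: field_simps)
  hence z: "0 \<le> z" "z < a" unfolding z_def by linarith+
  have "d \<le> z" using t z by (auto simp: mem_residue_window z_def)
  have "y \<notin> residue_window a d" if y: "t < y" "y < t + (a - z)" for y
  proof
    assume "y \<in> residue_window a d"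
    then obtain j where j: "0 \<le> y - a * of_int j" "y - a * of_int j < d"
      by (auto simp: mem_residue_window)
    have "a * of_int i < a * of_int j" using y j \<open>d \<le> z\<close> unfolding z_def by linarith
    moreover have "a * of_int j < a * of_int (i + 1)"
      using y j unfolding z_def by (simp add: algebra_simps)
    ultimately show False using a by simp
  qed
  thus "\<exists>\<beta>>t. \<forall>y. t < y \<longrightarrow> y < \<beta> \<longrightarrow> y \<notin> residue_window a d"
    using z by (intro exI[of _ "t + (a - z)"]) auto
qed

lemma finite_valued_pointwise_convergent_subseq:
  fixes x :: "nat \<Rightarrow> int \<Rightarrow> real"
  assumes V: "finite V" and xV: "\<And>k n. x k n \<in> V"
  obtains r l where "strict_mono r" "\<And>n. l n \<in> V" "\<And>n. \<forall>\<^sub>F k in sequentially. x (r k) n = l n"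
proof -
  have "compactin (product_topology (\<lambda>_. euclidean) UNIV) (PiE UNIV (\<lambda>_::int. V))"
    using V by (subst compactin_PiE) (auto intro: finite_imp_compact)
  hence "compact (PiE UNIV (\<lambda>_::int. V))" by (simp add: euclidean_product_topology)
  moreover have "x k \<in> PiE UNIV (\<lambda>_. V)" for k using xV by auto
  ultimately obtain l r where l: "l \<in> PiE UNIV (\<lambda>_. V)" and r: "strict_mono r"
    and lim: "(x \<circ> r) \<longlonglongrightarrow> l"
    using compact_imp_seq_compact unfolding seq_compact_def by metis
  have "\<forall>\<^sub>F k in sequentially. x (r k) n = l n" for n
  proof -
    have "(\<lambda>k. x (r k) n) \<longlonglongrightarrow> l n"
      using continuous_on_tendsto_compose[OF continuous_on_product_coordinates lim] by simp
    moreover have "open (- (V - {l n}))" using V by (intro open_Compl finite_imp_closed) auto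
    ultimately have "\<forall>\<^sub>F k in sequentially. x (r k) n \<in> - (V - {l n})"
      by (rule topological_tendstoD) simp
    thus ?thesis by (rule eventually_mono) (use xV in auto)
  qed
  with that r l show ?thesis by auto
qed

lemma Mentry_eventually_at_right:
  "\<forall>\<^sub>F s in at_right t. Mentry a b c s m n = Mentry a b c t m n"
proof -
  define y where "y = t - a * of_int m + b * of_int n"
  have E: "Mentry a b c s m n = indicator {0..<c} (y + (s - t))" for s
    by (simp add: Mentry_def y_def algebra_simps)
  define \<beta> where "\<beta> = (if y < 0 then t - y else if y < c then t + (c - y) else t + 1)"
  have "\<beta> > t" "\<And>s. t < s \<Longrightarrow> s < \<beta> \<Longrightarrow> Mentry a b c s m n = Mentry a b c t m n"
    unfolding \<beta>_def E by (auto simp: indicator_def split: if_splits)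
  thus ?thesis unfolding eventually_at_right_field by blast
qed

lemma finite_lattice_points:
  fixes b \<alpha> \<beta> :: real
  assumes b: "0 < b"
  shows "finite {n::int. \<alpha> \<le> b * of_int n \<and> b * of_int n \<le> \<beta>}"
proof (rule finite_subset)
  show "{n::int. \<alpha> \<le> b * of_int n \<and> b * of_int n \<le> \<beta>} \<subseteq> {\<lfloor>\<alpha> / b\<rfloor>..\<lceil>\<beta> / b\<rceil>}"
  proof
    fix n assume "n \<in> {n::int. \<alpha> \<le> b * of_int n \<and> b * of_int n \<le> \<beta>}"
    hence "\<alpha> / b \<le> of_int n" "of_int n \<le> \<beta> / b"
      using b by (auto simp: field_simps)
    thus "n \<in> {\<lfloor>\<alpha> / b\<rfloor>..\<lceil>\<beta> / b\<rceil>}" by (simp add: floor_le_iff le_ceiling_iff)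
  qed
qed simp

lemma Mmult_eventually_eq:
  assumes b: "0 < b" and s: "filterlim s (at_right t) F"
    and X: "\<And>n. \<forall>\<^sub>F i in F. X i n = l n"
  shows "\<forall>\<^sub>F i in F. Mmult a b c (s i) (X i) m = Mmult a b c t l m"
proof -
  define W where
    "W = {n::int. a * of_int m - t - 1 \<le> b * of_int n \<and> b * of_int n \<le> a * of_int m - t + c}"
  have W: "finite W" unfolding W_def by (rule finite_lattice_points[OF b])
  have row_W: "Mmult a b c u x m = (\<Sum>n\<in>W. Mentry a b c u m n * x n)"
    if "t \<le> u" "u < t + 1" for u x
    unfolding Mmult_def
    by (rule sum.mono_neutral_left[OF W]) (use that in \<open>auto simp: W_def Mentry_ne_0_iff\<close>)
  have "\<forall>\<^sub>F u in at_right t. t < u \<and> u < t + 1"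
    unfolding eventually_at_right_field by (intro exI[of _ "t + 1"]) auto
  hence near: "\<forall>\<^sub>F i in F. t < s i \<and> s i < t + 1" by (rule eventually_compose_filterlim[OF _ s])
  have agree: "\<forall>\<^sub>F i in F. \<forall>n\<in>W. Mentry a b c (s i) m n = Mentry a b c t m n \<and> X i n = l n"
    by (intro eventually_ball_finite[OF W] ballI eventually_conj X
        eventually_compose_filterlim[OF Mentry_eventually_at_right s])
  show ?thesis
    using near agree by eventually_elim (simp add: row_W)
qed

lemma frequently_at_right_imp_sequence:
  fixes t :: real
  assumes "\<exists>\<^sub>F y in at_right t. P y"
  obtains T where "\<And>k. P (T k)" "filterlim T (at_right t) sequentially"
proof -
  have "\<exists>y. P y \<and> t < y \<and> y < t + inverse (real (Suc k))" for k
  proof (rule ccontr)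
    assume "\<nexists>y. P y \<and> t < y \<and> y < t + inverse (real (Suc k))"
    hence "\<forall>\<^sub>F y in at_right t. \<not> P y"
      unfolding eventually_at_right_field by (intro exI[of _ "t + inverse (real (Suc k))"]) auto
    with assms show False by (simp add: frequently_def)
  qed
  then obtain T where T: "\<And>k. P (T k)" "\<And>k. t < T k" "\<And>k. T k < t + inverse (real (Suc k))"
    by metis
  have "T \<longlonglongrightarrow> t"
  proof (rule tendsto_sandwich[OF _ _ tendsto_const LIMSEQ_inverse_real_of_nat_add])
    show "\<forall>\<^sub>F k in sequentially. t \<le> T k"
      by (intro always_eventually allI less_imp_le T(2))
    show "\<forall>\<^sub>F k in sequentially. T k \<le> t + inverse (real (Suc k))"
      by (intro always_eventually allI less_imp_le T(3))
  qed
  hence "filterlim T (at_right t) sequentially"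
    using T(2) by (intro tendsto_imp_filterlim_at_right) auto
  with T(1) show ?thesis by (rule that)
qed

text \<open>Compactness of \<open>{0,1}\<^sup>\<int>\<close> and right-continuity of the matrix entries let a
  limit of solutions at \<open>T k \<searrow> t\<close> serve as a solution at \<open>t\<close>.\<close>

lemma right_closed_Sabc:
  assumes b: "0 < b"
  shows "right_closed (Sabc a b c)"
  unfolding right_closed_def
proof (intro allI impI)
  fix t assume "\<exists>\<^sub>F y in at_right t. y \<in> Sabc a b c"
  then obtain T where T: "\<And>k. T k \<in> Sabc a b c" and T_lim: "filterlim T (at_right t) sequentially"
    by (rule frequently_at_right_imp_sequence) blast
  obtain X where X: "\<And>k. binary_solution a b c (T k) (X k)" "\<And>k. X k 0 = 1"
    using T unfolding Sabc_iff by metis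
  obtain r l where r: "strict_mono r" and l01: "\<And>n. l n \<in> {0, 1}"
    and conv: "\<And>n. \<forall>\<^sub>F k in sequentially. X (r k) n = l n"
    using finite_valued_pointwise_convergent_subseq[of "{0, 1}" X] X(1)
    unfolding binary_solution_def by blast
  have Tr: "filterlim (\<lambda>k. T (r k)) (at_right t) sequentially"
    by (rule filterlim_compose[OF T_lim filterlim_subseq[OF r]])
  have "\<forall>\<^sub>F k in sequentially. Mmult a b c (T (r k)) (X (r k)) m = Mmult a b c t l m" for m
    by (rule Mmult_eventually_eq[OF b Tr conv])
  hence "\<forall>\<^sub>F k in sequentially. Mmult a b c t l m = 1" for m
    using X(1) by (auto simp: binary_solution_def elim: eventually_mono)
  hence "Mmult a b c t l m = 1" for m by simp
  moreover have "\<forall>\<^sub>F k in sequentially. l 0 = 1"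
    using conv[of 0] X(2) by (auto elim: eventually_mono)
  hence "l 0 = 1" by simp
  ultimately show "t \<in> Sabc a b c"
    using l01 unfolding Sabc_iff binary_solution_def by blast
qed

lemma dense_coset:
  fixes a b e y :: real
  assumes b: "0 < b" and irr: "a / b \<notin> \<rat>" and e: "0 < e"
  shows "\<exists>i n::int. y < a * of_int i + b * of_int n \<and> a * of_int i + b * of_int n < y + e"
proof -
  have "0 < e / (2 * b)" using b e by simp
  then obtain h k :: int
    where hk: "\<bar>of_int k * (a / b) - of_int h - (y + e / 2) / b\<bar> < e / (2 * b)"
    using sequence_of_fractional_parts_is_dense[OF irr] by blast
  have "a * of_int k + b * of_int (- h) - y - e / 2
      = b * (of_int k * (a / b) - of_int h - (y + e / 2) / b)"
    using b by (simp add: field_simps)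
  hence "\<bar>a * of_int k + b * of_int (- h) - y - e / 2\<bar>
      = b * \<bar>of_int k * (a / b) - of_int h - (y + e / 2) / b\<bar>"
    using b by (simp add: abs_mult)
  also have "\<dots> < e / 2" using hk b by (simp add: field_simps)
  finally show ?thesis by (intro exI[of _ k] exI[of _ "- h"]) linarith
qed

lemma Sabc_cover_eq_UNIV_irrational:
  assumes ab: "0 < a" "a < b" and c0: "c0 = c - of_int K * b" "c0 < a"
    and irr: "a / b \<notin> \<rat>" and t0: "t0 \<in> Sabc a b c"
  shows "Sabc_cover a b c K (c0 + a - b) = UNIV"
proof (rule right_closed_dense_eq_UNIV)
  show "right_closed (Sabc_cover a b c K (c0 + a - b))"
    unfolding Sabc_cover_def using ab
    by (intro right_closed_Un right_closed_Int right_closed_UN right_closed_translation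
        right_closed_Sabc right_closed_residue_window) auto
next
  fix r e :: real assume "0 < e"
  then obtain i n :: int
    where "r - t0 < a * of_int i + b * of_int n" "a * of_int i + b * of_int n < r - t0 + e"
    using dense_coset[of b a e "r - t0"] ab irr by auto
  moreover have "t0 + a * of_int i + b * of_int n \<in> Sabc_cover a b c K (c0 + a - b)"
    by (rule Sabc_coset_in_cover[OF t0 ab c0])
  ultimately show "\<exists>y\<in>Sabc_cover a b c K (c0 + a - b). r < y \<and> y < r + e"
    by (intro bexI[of _ "t0 + a * of_int i + b * of_int n"]) auto
qed

section \<open>Unions of cells: the rational case\<close>

definition cellwise :: "real \<Rightarrow> real set \<Rightarrow> bool" where
  "cellwise h A \<longleftrightarrow> (\<forall>r r'. \<lfloor>r / h\<rfloor> = \<lfloor>r' / h\<rfloor> \<longrightarrow> r \<in> A \<longrightarrow> r' \<in> A)"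

lemma cellwiseI:
  "(\<And>r r'. \<lfloor>r / h\<rfloor> = \<lfloor>r' / h\<rfloor> \<Longrightarrow> r \<in> A \<Longrightarrow> r' \<in> A) \<Longrightarrow> cellwise h A"
  unfolding cellwise_def by blast

lemma cellwiseD: "cellwise h A \<Longrightarrow> \<lfloor>r / h\<rfloor> = \<lfloor>r' / h\<rfloor> \<Longrightarrow> r \<in> A \<Longrightarrow> r' \<in> A"
  unfolding cellwise_def by blast

lemma cellwise_Un:
  assumes "cellwise h A" "cellwise h B"
  shows "cellwise h (A \<union> B)"
proof (rule cellwiseI)
  fix r r' assume "\<lfloor>r / h\<rfloor> = \<lfloor>r' / h\<rfloor>" "r \<in> A \<union> B"
  with cellwiseD[OF assms(1)] cellwiseD[OF assms(2)] show "r' \<in> A \<union> B" by blast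
qed

lemma cellwise_Int:
  assumes "cellwise h A" "cellwise h B"
  shows "cellwise h (A \<inter> B)"
proof (rule cellwiseI)
  fix r r' assume eq: "\<lfloor>r / h\<rfloor> = \<lfloor>r' / h\<rfloor>" and "r \<in> A \<inter> B"
  with cellwiseD[OF assms(1) eq] cellwiseD[OF assms(2) eq] show "r' \<in> A \<inter> B" by blast
qed

lemma cellwise_UN:
  assumes "\<And>i. i \<in> I \<Longrightarrow> cellwise h (A i)"
  shows "cellwise h (\<Union>i\<in>I. A i)"
proof (rule cellwiseI)
  fix r r' assume eq: "\<lfloor>r / h\<rfloor> = \<lfloor>r' / h\<rfloor>" and "r \<in> (\<Union>i\<in>I. A i)"
  then obtain i where "i \<in> I" "r \<in> A i" by blast
  with cellwiseD[OF assms eq] show "r' \<in> (\<Union>i\<in>I. A i)" by blast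
qed

lemma cellwise_translation:
  assumes A: "cellwise h A" and h: "0 < h" and s: "s = of_int j * h"
  shows "cellwise h ((\<lambda>y. y + s) ` A)"
proof (rule cellwiseI)
  have fl: "\<lfloor>(y - s) / h\<rfloor> = \<lfloor>y / h\<rfloor> - j" for y
  proof -
    have "(y - s) / h = y / h - of_int j" using h s by (simp add: field_simps)
    thus ?thesis by (simp add: floor_diff_of_int)
  qed
  fix r r' assume "\<lfloor>r / h\<rfloor> = \<lfloor>r' / h\<rfloor>" "r \<in> (\<lambda>y. y + s) ` A"
  hence "\<lfloor>(r - s) / h\<rfloor> = \<lfloor>(r' - s) / h\<rfloor>" "r - s \<in> A" by (auto simp: fl)
  hence "r' - s \<in> A" by (rule cellwiseD[OF A])
  thus "r' \<in> (\<lambda>y. y + s) ` A" by (rule rev_image_eqI) simp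
qed

lemma cellwise_eq_UNIV:
  assumes "cellwise h A" and "\<And>j. \<exists>r\<in>A. \<lfloor>r / h\<rfloor> = j"
  shows "A = UNIV"
proof -
  have "r' \<in> A" for r'
  proof -
    obtain r where "r \<in> A" "\<lfloor>r / h\<rfloor> = \<lfloor>r' / h\<rfloor>" using assms(2) by blast
    with cellwiseD[OF assms(1)] show ?thesis by blast
  qed
  thus ?thesis by blast
qed

lemma lattice_interval_iff_floor:
  fixes h t :: real
  assumes "0 < h"
  shows "(0 \<le> t - of_int z * h \<and> t - of_int z * h < of_int k * h) \<longleftrightarrow>
    (z \<le> \<lfloor>t / h\<rfloor> \<and> \<lfloor>t / h\<rfloor> < z + k)"
proof -
  have "0 \<le> t - of_int z * h \<longleftrightarrow> of_int z \<le> t / h" using assms by (simp add: field_simps)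
  moreover have "t - of_int z * h < of_int k * h \<longleftrightarrow> t / h < of_int (z + k)"
    using assms by (simp add: field_simps)
  ultimately show ?thesis by (simp add: le_floor_iff floor_less_iff)
qed

lemma cellwise_Sabc:
  assumes h: "0 < h" and abc: "a = of_int p * h" "b = of_int q * h" "c = of_int k * h"
  shows "cellwise h (Sabc a b c)"
proof (rule cellwiseI)
  fix r r' assume fl: "\<lfloor>r / h\<rfloor> = \<lfloor>r' / h\<rfloor>" and r: "r \<in> Sabc a b c"
  have "Mentry a b c r m n = Mentry a b c r' m n" for m n
  proof -
    have lattice: "s - a * of_int m + b * of_int n = s - of_int (p * m - q * n) * h" for s
      using abc by (simp add: algebra_simps)
    show ?thesis
      unfolding Mentry_def indicator_def lattice abc(3) atLeastLessThan_iff
        lattice_interval_iff_floor[OF h] fl ..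
  qed
  hence "Mentry a b c r = Mentry a b c r'" by (intro ext)
  with r show "r' \<in> Sabc a b c" by (simp add: Sabc_def Mmult_def)
qed

lemma cellwise_residue_window:
  assumes h: "0 < h" and ad: "a = of_int p * h" "d = of_int D * h"
  shows "cellwise h (residue_window a d)"
proof -
  have aj: "a * of_int j = of_int (p * j) * h" for j using ad(1) by simp
  have "y \<in> residue_window a d \<longleftrightarrow> (\<exists>j. p * j \<le> \<lfloor>y / h\<rfloor> \<and> \<lfloor>y / h\<rfloor> < p * j + D)" for y
    unfolding mem_residue_window aj ad(2) lattice_interval_iff_floor[OF h] ..
  thus ?thesis by (intro cellwiseI) simp
qed

lemma Sabc_cover_eq_UNIV_rational:
  assumes ab: "0 < a" "a < b" and c0: "c0 = c - of_int K * b" "c0 < a"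
    and pq: "0 < q" "coprime p q" "a / b = of_int p / of_int q"
    and kc: "c = b / of_int q * of_int k"
    and t0: "t0 \<in> Sabc a b c"
  shows "Sabc_cover a b c K (c0 + a - b) = UNIV"
proof -
  define h where "h = b / of_int q"
  have h: "0 < h" using ab pq by (simp add: h_def)
  have b: "b = of_int q * h" using pq by (simp add: h_def)
  have a: "a = of_int p * h"
    using pq(3) ab pq(1) by (simp add: h_def field_simps)
  have c: "c = of_int k * h" using kc by (simp add: h_def)
  have d: "c0 + a - b = of_int (k - K * q + p - q) * h"
    using c0(1) a b c by (simp add: algebra_simps)
  obtain u v :: int where uv: "u * p + v * q = 1"
    using bezout_int[of p q] pq(2) by (auto simp: coprime_iff_gcd_eq_1)
  show ?thesis
  proof (rule cellwise_eq_UNIV)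
    have shift: "cellwise h ((\<lambda>t. t + of_int k * b) ` A)" if "cellwise h A" for k A
      by (rule cellwise_translation[OF that h, where j = "k * q"]) (simp add: b)
    show "cellwise h (Sabc_cover a b c K (c0 + a - b))"
      unfolding Sabc_cover_def
      by (intro cellwise_Un cellwise_Int cellwise_UN shift
          cellwise_Sabc[OF h a b c] cellwise_residue_window[OF h a d])
  next
    fix j
    define N where "N = j - \<lfloor>t0 / h\<rfloor>"
    have "t0 + a * of_int (N * u) + b * of_int (N * v) = t0 + of_int N * h * of_int (u * p + v * q)"
      by (simp add: a b algebra_simps)
    also have "\<dots> = t0 + of_int N * h" by (simp add: uv)
    finally have r: "t0 + a * of_int (N * u) + b * of_int (N * v) = t0 + of_int N * h" .
    have "(t0 + of_int N * h) / h = t0 / h + of_int N" using h by (simp add: field_simps)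
    hence "\<lfloor>(t0 + of_int N * h) / h\<rfloor> = j" by (simp add: N_def)
    with Sabc_coset_in_cover[OF t0 ab c0, of "N * u" "N * v"]
    show "\<exists>r\<in>Sabc_cover a b c K (c0 + a - b). \<lfloor>r / h\<rfloor> = j" unfolding r by blast
  qed
qed

theorem theorem5p3:
  fixes a b c c0 c1 :: real
  assumes "0 < a" "a < b" "b < c"
    and "\<lfloor>c / b\<rfloor> \<ge> 2"
    and "c0 = c - of_int \<lfloor>c / b\<rfloor> * b"
    and "c1 = c - c0 - of_int \<lfloor>(c - c0) / a\<rfloor> * a"
    and "b - a < c0" "c0 < a"
    and "0 \<le> c1" "c1 \<le> 2 * a - b"
    and "Sabc a b c \<noteq> {}"
    and "a / b \<notin> \<rat> \<or>
         (\<exists>p q :: int. 0 < p \<and> 0 < q \<and> coprime p q \<and> a / b = of_int p / of_int q \<and>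
            (\<exists>k :: int. c = (b / of_int q) * of_int k))"
  shows "(\<lambda>t. t + of_int \<lfloor>c / b\<rfloor> * b) `
           (Sabc a b c \<inter> {x + a * of_int k | x k. x \<in> {0..<c0 + a - b} \<and> k \<in> (UNIV :: int set)})
         \<union> (\<Union>k\<in>{0..<\<lfloor>c / b\<rfloor>}. (\<lambda>t. t + of_int k * b) ` Sabc a b c) = UNIV"
proof -
  obtain t0 where t0: "t0 \<in> Sabc a b c" using assms(11) by blast
  from assms(12) have "Sabc_cover a b c \<lfloor>c / b\<rfloor> (c0 + a - b) = UNIV"
  proof
    assume "a / b \<notin> \<rat>"
    from Sabc_cover_eq_UNIV_irrational[OF assms(1,2,5,8) this t0] show ?thesis .
  next
    assume "\<exists>p q :: int. 0 < p \<and> 0 < q \<and> coprime p q \<and> a / b = of_int p / of_int q \<and>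
            (\<exists>k :: int. c = (b / of_int q) * of_int k)"
    then obtain p q k :: int where "0 < q" "coprime p q" "a / b = of_int p / of_int q"
      "c = b / of_int q * of_int k"
      by blast
    from Sabc_cover_eq_UNIV_rational[OF assms(1,2,5,8) this t0] show ?thesis .
  qed
  thus ?thesis unfolding Sabc_cover_def residue_window_def .
qed

end
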